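(* In the continuous MRA model, for any $L\ge1$ and any $\theta,\theta_*\in\mathbb{R}^d$, \[s_1(\theta)=\tfrac12\big(\theta^{(0)}-\theta_*^{(0)}\big)^2,\qquad s_2(\theta)=\tfrac14\big((\theta^{(0)})^2-(\theta_*^{(0)})^2\big)^2+\tfrac18\sum_{l=1}^L\big(r_l(\theta)^2-r_l(\theta_* )^2\big)^2,\] \[s_3(\theta)=\tfrac1{48}\big((u^{(0)}(\theta))^3-(u^{(0)}(\theta_* ))^3\big)^2+\tfrac1{16}\sum_{\substack{l,l',l''=0\\ l=l'+l''}}^L\Big|u^{(l)}(\theta)\overline{u^{(l')}(\theta)u^{(l'')}(\theta)}-u^{(l)}(\theta_* )\overline{u^{(l')}(\theta_* )u^{(l'')}(\theta_* )}\Big|^2\] \[=\tfrac1{12}\big((\theta^{(0)})^3-(\theta_*^{(0)})^3\big)^2+\tfrac18\sum_{l=1}^L\big(\theta^{(0)}r_l(\theta)^2-\theta_*^{(0)}r_l(\theta_* )^2\big)^2+\tfrac1{16}\sum_{\substack{l,l',l''=1\\ l=l'+l''}}^L\Big(r_{l,l',l''}(\theta)^2+r_{l,l',l''}(\theta_* )^2-2r_{l,l',l''}(\theta)r_{l,l',l''}(\theta_* )\cos\big(\lambda_{l,l',l''}(\theta_* )-\lambda_{l,l',l''}(\theta)\big)\Big).\]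
   Context: Continuous MRA model: $\theta=(\theta^{(0)},\theta_1^{(1)},\theta_2^{(1)},\dots,\theta_1^{(L)},\theta_2^{(L)})\in\mathbb{R}^d$, $d=2L+1$; $\mathsf{G}\subset\mathsf{O}(d)$ is the group of $g=\operatorname{diag}(1,R_1(\mathfrak g),\dots,R_L(\mathfrak g))$, $\mathfrak g\in[0,1)$, $R_l(\mathfrak g)=\begin{pmatrix}\cos2\pi l\mathfrak g&\sin2\pi l\mathfrak g\\-\sin2\pi l\mathfrak g&\cos2\pi l\mathfrak g\end{pmatrix}$, with Haar probability measure $\Lambda$. $T_k(\theta)=\int(g\theta)^{\otimes k}d\Lambda(g)$ and $s_k(\theta)=\frac1{2(k!)}\|T_k(\theta)-T_k(\theta_* )\|_{\mathrm{HS}}^2$ (Euclidean norm of tensor entries). Complex coefficients: $u^{(0)}(\theta)=\theta^{(0)}$ and $u^{(l)}(\theta)=\theta_1^{(l)}+i\theta_2^{(l)}=r_l(\theta)e^{i\lambda_l(\theta)}$ for $l\ge1$ (magnitude $r_l$, phase $\lambda_l$). $r_{l,l',l''}=r_lr_{l'}r_{l''}$ and $\lambda_{l,l',l''}=\lambda_l-\lambda_{l'}-\lambda_{l''}$. *)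

theory Defs
  imports "HOL-Analysis.Analysis"
begin

text \<open>Coordinates: a parameter vector theta in R^d, d = 2L+1, is represented by a function
  nat => real; coordinate 0 is theta^(0), coordinate 2l-1 is theta_1^(l), coordinate 2l is
  theta_2^(l) (1 <= l <= L). Coordinates >= d are never used.\<close>

definition mra_dim :: "nat \<Rightarrow> nat" where
  "mra_dim L = 2 * L + 1"

definition gact :: "nat \<Rightarrow> real \<Rightarrow> (nat \<Rightarrow> real) \<Rightarrow> (nat \<Rightarrow> real)" where
  "gact L t \<theta> i =
     (if i = 0 then \<theta> 0
      else if i \<le> 2 * L then
        (let l = (i + 1) div 2; c = cos (2 * pi * real l * t); s = sin (2 * pi * real l * t) in
          if odd i then c * \<theta> (2 * l - 1) + s * \<theta> (2 * l)
          else - s * \<theta> (2 * l - 1) + c * \<theta> (2 * l))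
      else 0)"

definition tidx :: "nat \<Rightarrow> nat \<Rightarrow> nat list set" where
  "tidx L k = {xs. length xs = k \<and> set xs \<subseteq> {0..<mra_dim L}}"

text \<open>Moment tensor T_k(theta) = integral of (g theta)^{\<otimes>k} against the Haar probability
  measure (Lebesgue measure on [0,1)); entry at index tuple xs.\<close>
definition Tk :: "nat \<Rightarrow> nat \<Rightarrow> (nat \<Rightarrow> real) \<Rightarrow> nat list \<Rightarrow> real" where
  "Tk L k \<theta> xs = integral {0..1} (\<lambda>t. \<Prod>j<k. gact L t \<theta> (xs ! j))"

definition sk :: "nat \<Rightarrow> (nat \<Rightarrow> real) \<Rightarrow> nat \<Rightarrow> (nat \<Rightarrow> real) \<Rightarrow> real" where
  "sk L \<theta>s k \<theta> = 1 / (2 * fact k) * (\<Sum>xs\<in>tidx L k. (Tk L k \<theta> xs - Tk L k \<theta>s xs)^2)"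

definition ucoef :: "nat \<Rightarrow> (nat \<Rightarrow> real) \<Rightarrow> complex" where
  "ucoef l \<theta> = (if l = 0 then complex_of_real (\<theta> 0) else Complex (\<theta> (2 * l - 1)) (\<theta> (2 * l)))"

definition rmag :: "nat \<Rightarrow> (nat \<Rightarrow> real) \<Rightarrow> real" where
  "rmag l \<theta> = cmod (ucoef l \<theta>)"

definition phase :: "nat \<Rightarrow> (nat \<Rightarrow> real) \<Rightarrow> real" where
  "phase l \<theta> = Arg (ucoef l \<theta>)"

definition r3 :: "nat \<Rightarrow> nat \<Rightarrow> nat \<Rightarrow> (nat \<Rightarrow> real) \<Rightarrow> real" where
  "r3 l l' l'' \<theta> = rmag l \<theta> * rmag l' \<theta> * rmag l'' \<theta>"

definition lam3 :: "nat \<Rightarrow> nat \<Rightarrow> nat \<Rightarrow> (nat \<Rightarrow> real) \<Rightarrow> real" where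
  "lam3 l l' l'' \<theta> = phase l \<theta> - phase l' \<theta> - phase l'' \<theta>"

definition triples :: "nat \<Rightarrow> nat \<Rightarrow> (nat \<times> nat \<times> nat) set" where
  "triples lo L = {(l, l', l''). l \<in> {lo..L} \<and> l' \<in> {lo..L} \<and> l'' \<in> {lo..L} \<and> l = l' + l''}"

end

theory Submission
  imports Defs
begin

(* The Hilbert-Schmidt inner product of moment tensors is a double orbit integral,
   <T_k theta, T_k eta> = int int <g_t theta, g_s eta>^k dt ds, and in Fourier coordinates
   <g_t theta, g_s eta>
     = theta^(0) eta^(0) + sum_l Re (u^(l)(theta) conj (u^(l)(eta)) e^(2 pi i l (s - t))).
   Integrating the k-th power of this trigonometric polynomial in s, orthogonality of the characters
   keeps only frequency-balanced products, which do not depend on t: the power spectrum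
   |u^(l)|^2 for k = 2 and the bispectrum u^(l) conj (u^(l') u^(l'')), l = l' + l'', for k = 3.
   Expanding |T_k theta - T_k theta_*|^2 into three inner products gives s_1, s_2, s_3; the complex
   form of s_3 merely adds the degenerate triples with l' = 0 or l'' = 0, and the polar form is
   the law of cosines. *)

section \<open>Characters of the circle\<close>

definition circle_char :: "int \<Rightarrow> real \<Rightarrow> complex" where
  "circle_char N s = cis (2 * pi * of_int N * s)"

lemma circle_char_add: "circle_char (M + N) s = circle_char M s * circle_char N s"
  by (simp add: circle_char_def cis_mult distrib_left distrib_right)

lemma cnj_circle_char: "cnj (circle_char N s) = circle_char (- N) s"
  by (simp add: circle_char_def cis_cnj)

lemma circle_char_0 [simp]: "circle_char 0 s = 1"
  by (simp add: circle_char_def)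

lemma norm_circle_char [simp]: "norm (circle_char N s) = 1"
  by (simp add: circle_char_def)

lemma has_integral_circle_char:
  "(circle_char N has_integral (if N = 0 then 1 else 0)) {0..1}"
proof (cases "N = 0")
  case True
  moreover have "circle_char 0 = (\<lambda>s. 1)"
    by (simp add: fun_eq_iff)
  ultimately show ?thesis using has_integral_const_real[of 1 0 1] by simp
next
  case False
  define c where "c = \<i> * of_real (2 * pi * of_int N)"
  have "c \<noteq> 0" using False by (simp add: c_def)
  have char_exp: "circle_char N s = exp (c * of_real s)" for s
    by (simp add: circle_char_def c_def cis_conv_exp algebra_simps)
  have "((\<lambda>s. exp (c * of_real s) / c) has_vector_derivative circle_char N s) (at s within {0..1})"
    for s
  proof -
    have "((\<lambda>z. exp (c * z) / c) has_field_derivative exp (c * of_real s)) (at (of_real s))"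
      using \<open>c \<noteq> 0\<close> by (auto intro!: derivative_eq_intros)
    from has_vector_derivative_real_field[OF this] show ?thesis by (simp add: char_exp)
  qed
  then have "(circle_char N has_integral (exp (c * of_real 1) / c - exp (c * of_real 0) / c)) {0..1}"
    by (intro fundamental_theorem_of_calculus) auto
  moreover have "exp c = 1"
    using exp_2pi_1_int[of N] by (simp add: c_def algebra_simps)
  ultimately show ?thesis using False by simp
qed

lemma has_integral_Re_circle_char:
  "((\<lambda>s. Re (A * circle_char N s)) has_integral (if N = 0 then Re A else 0)) {0..1}"
proof -
  have "((\<lambda>s. A * circle_char N s) has_integral A * (if N = 0 then 1 else 0)) {0..1}"
    by (intro has_integral_mult_right has_integral_circle_char)
  from has_integral_linear[OF this bounded_linear_Re] show ?thesis
    by (cases "N = 0") (simp_all add: o_def)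
qed

lemma Re_mult_Re: "Re a * Re b = (Re (a * b) + Re (a * cnj b)) / 2"
  by (simp add: field_simps)

lemma Re_circle_char_mult_Re_circle_char:
  "Re (A * circle_char M s) * Re (B * circle_char N s)
     = Re (A * B * circle_char (M + N) s) / 2 + Re (A * cnj B * circle_char (M - N) s) / 2"
proof -
  have "A * circle_char M s * (B * circle_char N s) = A * B * circle_char (M + N) s"
    by (simp add: circle_char_add)
  moreover have "A * circle_char M s * cnj (B * circle_char N s) = A * cnj B * circle_char (M - N) s"
    by (simp add: circle_char_add[of M "- N", simplified] cnj_circle_char)
  ultimately show ?thesis
    by (simp only: Re_mult_Re add_divide_distrib)
qed

lemma has_integral_Re_circle_char_mult:
  "((\<lambda>s. Re (A * circle_char M s) * Re (B * circle_char N s)) has_integral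
     (if M + N = 0 then Re (A * B) / 2 else 0) + (if M = N then Re (A * cnj B) / 2 else 0)) {0..1}"
proof -
  have "((\<lambda>s. Re (A * B * circle_char (M + N) s) / 2 + Re (A * cnj B * circle_char (M - N) s) / 2)
      has_integral (if M + N = 0 then Re (A * B) else 0) / 2 + (if M - N = 0 then Re (A * cnj B) else 0) / 2)
    {0..1}"
    by (intro has_integral_add has_integral_divide has_integral_Re_circle_char)
  moreover have "(if M + N = 0 then Re (A * B) else 0) / 2 + (if M - N = 0 then Re (A * cnj B) else 0) / 2
    = (if M + N = 0 then Re (A * B) / 2 else 0) + (if M = N then Re (A * cnj B) / 2 else 0)"
    by simp
  ultimately show ?thesis
    unfolding Re_circle_char_mult_Re_circle_char by simp
qed

lemma has_integral_Re_circle_char_mult3: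
  fixes l m n :: nat
  assumes "0 < l" "0 < m" "0 < n"
  shows "((\<lambda>s. Re (A * circle_char l s) * Re (B * circle_char m s) * Re (C * circle_char n s))
    has_integral ((if l = m + n then Re (cnj A * B * C) else 0) + (if m = l + n then Re (A * cnj B * C) else 0)
      + (if n = l + m then Re (A * B * cnj C) else 0)) / 4) {0..1}"
proof -
  let ?I = "\<lambda>M N X Y. (if M + N = 0 then Re (X * Y) / 2 else 0) + (if M = N then Re (X * cnj Y) / 2 else 0)"
  have "((\<lambda>s. Re (A * B * circle_char (int l + int m) s) * Re (C * circle_char n s) / 2
       + Re (A * cnj B * circle_char (int l - int m) s) * Re (C * circle_char n s) / 2)
    has_integral ?I (int l + int m) n (A * B) C / 2 + ?I (int l - int m) n (A * cnj B) C / 2) {0..1}"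
    by (intro has_integral_add has_integral_divide has_integral_Re_circle_char_mult)
  moreover have "?I (int l + int m) n (A * B) C / 2 + ?I (int l - int m) n (A * cnj B) C / 2
    = ((if l = m + n then Re (cnj A * B * C) else 0) + (if m = l + n then Re (A * cnj B * C) else 0)
      + (if n = l + m then Re (A * B * cnj C) else 0)) / 4"
  proof -
    have "Re (A * cnj B * cnj C) = Re (cnj A * B * C)"
      by (simp add: algebra_simps)
    then show ?thesis
      using assms by auto
  qed
  ultimately show ?thesis
    unfolding Re_circle_char_mult_Re_circle_char[where M = "int l" and N = "int m"]
    by (simp only: distrib_right times_divide_eq_left)
qed

section \<open>Moments of real trigonometric polynomials\<close>

definition trig_poly :: "(nat \<Rightarrow> complex) \<Rightarrow> nat \<Rightarrow> real \<Rightarrow> real" where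
  "trig_poly q L s = (\<Sum>l=1..L. Re (q l * circle_char l s))"

lemma has_integral_trig_poly: "(trig_poly q L has_integral 0) {0..1}"
proof -
  have "((\<lambda>s. \<Sum>l=1..L. Re (q l * circle_char l s)) has_integral (\<Sum>l=1..L. 0)) {0..1}"
    by (intro has_integral_sum finite_atLeastAtMost has_integral_Re_circle_char[THEN has_integral_eq_rhs])
      auto
  then show ?thesis
    by (simp add: trig_poly_def[abs_def])
qed

lemma has_integral_trig_poly_power2:
  "((\<lambda>s. trig_poly q L s ^ 2) has_integral (\<Sum>l=1..L. cmod (q l) ^ 2) / 2) {0..1}"
proof -
  have "((\<lambda>s. \<Sum>l=1..L. \<Sum>m=1..L. Re (q l * circle_char l s) * Re (q m * circle_char m s))
      has_integral (\<Sum>l=1..L. \<Sum>m=1..L. if l = m then Re (q l * cnj (q m)) / 2 else 0)) {0..1}"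
    by (intro has_integral_sum finite_atLeastAtMost
        has_integral_Re_circle_char_mult[THEN has_integral_eq_rhs]) auto
  moreover have "(\<Sum>l=1..L. \<Sum>m=1..L. if l = m then Re (q l * cnj (q m)) / 2 else 0)
    = (\<Sum>l=1..L. cmod (q l) ^ 2) / 2"
    by (simp add: sum_divide_distrib cmod_power2 flip: power2_eq_square)
  moreover have "(\<lambda>s. trig_poly q L s ^ 2)
    = (\<lambda>s. \<Sum>l=1..L. \<Sum>m=1..L. Re (q l * circle_char l s) * Re (q m * circle_char m s))"
    by (simp add: trig_poly_def power2_eq_square sum_product del: times_complex.sel)
  ultimately show ?thesis
    by (simp only:)
qed

lemma sum_triples_eq_sum_cube:
  "(\<Sum>(l, m, n)\<in>triples lo L. f l m n)
    = (\<Sum>l=lo..L. \<Sum>m=lo..L. \<Sum>n=lo..L. if l = m + n then f l m n else 0)"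
proof -
  have "(\<Sum>(l, m, n)\<in>triples lo L. f l m n)
    = (\<Sum>(l, m, n)\<in>{lo..L} \<times> {lo..L} \<times> {lo..L}. if l = m + n then f l m n else 0)"
    by (intro sum.mono_neutral_cong_left) (auto simp: triples_def split: if_splits)
  then show ?thesis
    by (simp add: sum.cartesian_product)
qed

lemma sum_power3_eq_triple_sum:
  fixes f :: "'a \<Rightarrow> 'b::comm_semiring_1"
  shows "sum f A ^ 3 = (\<Sum>l\<in>A. \<Sum>m\<in>A. \<Sum>n\<in>A. f l * f m * f n)"
proof -
  have "sum f A ^ 3 = sum f A * (sum f A * sum f A)"
    by (simp only: power3_eq_cube mult.assoc)
  also have "\<dots> = (\<Sum>l\<in>A. \<Sum>m\<in>A. \<Sum>n\<in>A. f l * (f m * f n))"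
    by (simp only: sum_distrib_right) (simp only: sum_distrib_left)
  finally show ?thesis
    by (simp only: mult.assoc)
qed

lemma has_integral_trig_poly_power3:
  "((\<lambda>s. trig_poly q L s ^ 3) has_integral
     3 / 4 * (\<Sum>(l, m, n)\<in>triples 1 L. Re (cnj (q l) * q m * q n))) {0..1}"
proof -
  define R where "R l s = Re (q l * circle_char l s)" for l s
  define G where "G l m n = (if l = m + n then Re (cnj (q l) * q m * q n) else 0)" for l m n
  let ?cube = "\<lambda>F. \<Sum>l=1..L. \<Sum>m=1..L. \<Sum>n=1..L. F l m n :: real"
  have "((\<lambda>s. ?cube (\<lambda>l m n. R l s * R m s * R n s))
      has_integral ?cube (\<lambda>l m n. (G l m n + G m l n + G n l m) / 4)) {0..1}"
    unfolding R_def
    by (intro has_integral_sum finite_atLeastAtMost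
        has_integral_Re_circle_char_mult3[THEN has_integral_eq_rhs])
      (auto simp: G_def mult.commute mult.left_commute simp del: times_complex.sel)
  moreover have "(\<lambda>s. trig_poly q L s ^ 3) = (\<lambda>s. ?cube (\<lambda>l m n. R l s * R m s * R n s))"
    by (simp only: trig_poly_def R_def[symmetric] sum_power3_eq_triple_sum)
  moreover have "?cube (\<lambda>l m n. (G l m n + G m l n + G n l m) / 4) = 3 / 4 * ?cube G"
  proof -
    have "?cube (\<lambda>l m n. G m l n) = ?cube G"
      by (rule sum.swap)
    moreover have "?cube (\<lambda>l m n. G n l m) = ?cube G"
    proof -
      have "?cube (\<lambda>l m n. G n l m) = (\<Sum>l=1..L. \<Sum>n=1..L. \<Sum>m=1..L. G n l m)"
        by (intro sum.cong refl sum.swap)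
      also have "\<dots> = ?cube G"
        by (rule sum.swap)
      finally show ?thesis .
    qed
    ultimately show ?thesis
      by (simp only: sum_divide_distrib[symmetric] sum.distrib) simp
  qed
  ultimately have "((\<lambda>s. trig_poly q L s ^ 3) has_integral 3 / 4 * ?cube G) {0..1}"
    by (simp only:)
  then show ?thesis
    unfolding sum_triples_eq_sum_cube G_def .
qed

lemma has_integral_const_add_trig_poly:
  "((\<lambda>s. a + trig_poly q L s) has_integral a) {0..1}"
  using has_integral_add[OF has_integral_const_real[of a 0 1] has_integral_trig_poly] by simp

lemma has_integral_const_add_trig_poly_power2:
  "((\<lambda>s. (a + trig_poly q L s) ^ 2) has_integral a ^ 2 + (\<Sum>l=1..L. cmod (q l) ^ 2) / 2) {0..1}"
proof -
  have "((\<lambda>s. a ^ 2 + 2 * a * trig_poly q L s + trig_poly q L s ^ 2) has_integral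
      a ^ 2 + 2 * a * 0 + (\<Sum>l=1..L. cmod (q l) ^ 2) / 2) {0..1}"
    using has_integral_const_real[of "a ^ 2" 0 1]
    by (intro has_integral_add has_integral_mult_right has_integral_trig_poly
        has_integral_trig_poly_power2) simp_all
  moreover have "(a + x) ^ 2 = a ^ 2 + 2 * a * x + x ^ 2" for x :: real
    by algebra
  ultimately show ?thesis
    by simp
qed

lemma has_integral_const_add_trig_poly_power3:
  "((\<lambda>s. (a + trig_poly q L s) ^ 3) has_integral
     a ^ 3 + 3 / 2 * a * (\<Sum>l=1..L. cmod (q l) ^ 2)
       + 3 / 4 * (\<Sum>(l, m, n)\<in>triples 1 L. Re (cnj (q l) * q m * q n))) {0..1}"
proof -
  have "((\<lambda>s. a ^ 3 + 3 * a ^ 2 * trig_poly q L s + 3 * a * trig_poly q L s ^ 2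
        + trig_poly q L s ^ 3) has_integral
      a ^ 3 + 3 * a ^ 2 * 0 + 3 * a * ((\<Sum>l=1..L. cmod (q l) ^ 2) / 2)
        + 3 / 4 * (\<Sum>(l, m, n)\<in>triples 1 L. Re (cnj (q l) * q m * q n))) {0..1}"
    using has_integral_const_real[of "a ^ 3" 0 1]
    by (intro has_integral_add has_integral_mult_right has_integral_trig_poly
        has_integral_trig_poly_power2 has_integral_trig_poly_power3) simp_all
  moreover have "(a + x) ^ 3 = a ^ 3 + 3 * a ^ 2 * x + 3 * a * x ^ 2 + x ^ 3" for x :: real
    by algebra
  ultimately show ?thesis
    by simp
qed

section \<open>Moment tensors of the MRA model\<close>

lemma gact_0 [simp]: "gact L t \<theta> 0 = \<theta> 0"
  by (simp add: gact_def)

lemma ucoef_gact: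
  assumes "1 \<le> l" "l \<le> L"
  shows "ucoef l (gact L t \<theta>) = circle_char (- int l) t * ucoef l \<theta>"
proof -
  have "(2 * l - 1 + 1) div 2 = l" "(2 * l + 1) div 2 = l" "odd (2 * l - 1)"
    using assms by auto
  with assms show ?thesis
    by (simp add: ucoef_def gact_def circle_char_def cis.ctr complex_eq_iff algebra_simps)
qed

lemma sum_lessThan_Suc_double:
  fixes f :: "nat \<Rightarrow> 'a::comm_monoid_add"
  shows "(\<Sum>i<2 * L + 1. f i) = f 0 + (\<Sum>l=1..L. f (2 * l - 1) + f (2 * l))"
  by (induction L) (simp_all add: algebra_simps)

lemma sum_coords_eq_Re_ucoef:
  "(\<Sum>i<mra_dim L. x i * y i) = x 0 * y 0 + (\<Sum>l=1..L. Re (ucoef l x * cnj (ucoef l y)))"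
  unfolding mra_dim_def sum_lessThan_Suc_double
  by (intro arg_cong2[where f = "(+)"] sum.cong) (simp_all add: ucoef_def)

(* cross_coef theta eta t l = u^(l)(g_t theta) conj (u^(l)(eta)), the l-th Fourier coefficient
   of s \<mapsto> <g_t theta, g_s eta> *)
definition cross_coef :: "(nat \<Rightarrow> real) \<Rightarrow> (nat \<Rightarrow> real) \<Rightarrow> real \<Rightarrow> nat \<Rightarrow> complex" where
  "cross_coef \<theta> \<eta> t l = ucoef l \<theta> * cnj (ucoef l \<eta>) * circle_char (- int l) t"

lemma sum_coords_gact:
  "(\<Sum>i<mra_dim L. gact L t \<theta> i * gact L s \<eta> i)
    = \<theta> 0 * \<eta> 0 + trig_poly (cross_coef \<theta> \<eta> t) L s"
  unfolding sum_coords_eq_Re_ucoef trig_poly_def cross_coef_def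
  by (intro arg_cong2[where f = "(+)"] sum.cong)
    (simp_all add: ucoef_gact cnj_circle_char ac_simps del: times_complex.sel)

lemma sum_lists_length_prod_nth:
  fixes f :: "'a \<Rightarrow> 'b::comm_semiring_1"
  shows "(\<Sum>xs | length xs = k \<and> set xs \<subseteq> A. \<Prod>j<k. f (xs ! j)) = sum f A ^ k"
proof (induction k)
  case 0
  have "{xs. length xs = 0 \<and> set xs \<subseteq> A} = {[]}"
    by auto
  then show ?case
    by simp
next
  case (Suc k)
  let ?lists = "{xs. set xs \<subseteq> A \<and> length xs = k}"
  have "{xs. length xs = Suc k \<and> set xs \<subseteq> A} = (\<lambda>(xs, a). a # xs) ` (?lists \<times> A)"
    using lists_length_Suc_eq[of A k] by (simp add: conj_commute)
  moreover have "inj_on (\<lambda>(xs, a). a # xs) (?lists \<times> A)"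
    by (auto simp: inj_on_def)
  ultimately have "(\<Sum>xs | length xs = Suc k \<and> set xs \<subseteq> A. \<Prod>j<Suc k. f (xs ! j))
      = (\<Sum>(xs, a)\<in>?lists \<times> A. f a * (\<Prod>j<k. f (xs ! j)))"
    by (simp add: sum.reindex prod.lessThan_Suc_shift case_prod_unfold del: prod.lessThan_Suc)
  also have "\<dots> = sum f A * (\<Sum>xs\<in>?lists. \<Prod>j<k. f (xs ! j))"
    by (simp add: sum.cartesian_product[symmetric] sum_distrib_left sum_distrib_right
        sum.swap[of _ ?lists] mult.commute)
  finally show ?case
    using Suc by (simp add: conj_commute)
qed

lemma continuous_on_gact: "continuous_on A (\<lambda>t. gact L t \<theta> i)"
  by (cases "i = 0"; cases "i \<le> 2 * L"; cases "odd i")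
    (simp_all add: gact_def Let_def, (intro continuous_intros)+)

definition moment_inner :: "nat \<Rightarrow> nat \<Rightarrow> (nat \<Rightarrow> real) \<Rightarrow> (nat \<Rightarrow> real) \<Rightarrow> real" where
  "moment_inner L k \<theta> \<eta> = (\<Sum>xs\<in>tidx L k. Tk L k \<theta> xs * Tk L k \<eta> xs)"

(* <x^k, y^k> = <x, y>^k for tensor powers, integrated against the product of two Haar measures *)
lemma moment_inner_eq_double_integral:
  "moment_inner L k \<theta> \<eta> = integral {0..1} (\<lambda>t. integral {0..1} (\<lambda>s.
     (\<Sum>i<mra_dim L. gact L t \<theta> i * gact L s \<eta> i) ^ k))"
proof -
  define F where "F \<zeta> xs t = (\<Prod>j<k. gact L t \<zeta> (xs ! j))" for \<zeta> xs t
  have cont: "continuous_on {0..1} (F \<zeta> xs)" for \<zeta> xs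
    unfolding F_def by (intro continuous_intros continuous_on_gact)
  have fin: "finite (tidx L k)"
    using finite_lists_length_eq[of "{0..<mra_dim L}" k] by (simp add: tidx_def conj_commute)
  have "moment_inner L k \<theta> \<eta>
      = (\<Sum>xs\<in>tidx L k. integral {0..1} (\<lambda>t. integral {0..1} (\<lambda>s. F \<theta> xs t * F \<eta> xs s)))"
    by (simp add: moment_inner_def Tk_def F_def)
  also have "\<dots> = integral {0..1} (\<lambda>t. \<Sum>xs\<in>tidx L k. integral {0..1} (\<lambda>s. F \<theta> xs t * F \<eta> xs s))"
    using fin cont
    by (intro integral_sum[symmetric]) (auto intro!: integrable_continuous_interval continuous_intros)
  also have "\<dots> = integral {0..1} (\<lambda>t. integral {0..1} (\<lambda>s. \<Sum>xs\<in>tidx L k. F \<theta> xs t * F \<eta> xs s))"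
    using fin cont
    by (intro integral_cong integral_sum[symmetric])
      (auto intro!: integrable_continuous_interval continuous_intros)
  also have "\<dots> = integral {0..1} (\<lambda>t. integral {0..1} (\<lambda>s.
      (\<Sum>i<mra_dim L. gact L t \<theta> i * gact L s \<eta> i) ^ k))"
  proof (intro integral_cong)
    fix t s
    show "(\<Sum>xs\<in>tidx L k. F \<theta> xs t * F \<eta> xs s) = (\<Sum>i<mra_dim L. gact L t \<theta> i * gact L s \<eta> i) ^ k"
      using sum_lists_length_prod_nth[where f = "\<lambda>i. gact L t \<theta> i * gact L s \<eta> i"]
      by (simp add: F_def tidx_def prod.distrib atLeast0LessThan)
  qed
  finally show ?thesis .
qed

section \<open>The first three moments\<close>

definition bispec :: "nat \<Rightarrow> nat \<Rightarrow> nat \<Rightarrow> (nat \<Rightarrow> real) \<Rightarrow> complex" where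
  "bispec l m n \<theta> = ucoef l \<theta> * cnj (ucoef m \<theta> * ucoef n \<theta>)"

lemma norm_cross_coef: "cmod (cross_coef \<theta> \<eta> t l) = rmag l \<theta> * rmag l \<eta>"
  by (simp add: cross_coef_def norm_mult rmag_def)

lemma cnj_cross_coef_mult:
  assumes "l = m + n"
  shows "cnj (cross_coef \<theta> \<eta> t l) * cross_coef \<theta> \<eta> t m * cross_coef \<theta> \<eta> t n
    = cnj (bispec l m n \<theta>) * bispec l m n \<eta>"
proof -
  have phase: "cnj (circle_char (- int l) t) * (circle_char (- int m) t * circle_char (- int n) t) = 1"
    using assms by (simp add: cnj_circle_char flip: circle_char_add)
  have "cnj (cross_coef \<theta> \<eta> t l) * cross_coef \<theta> \<eta> t m * cross_coef \<theta> \<eta> t n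
    = cnj (bispec l m n \<theta>) * bispec l m n \<eta>
      * (cnj (circle_char (- int l) t) * (circle_char (- int m) t * circle_char (- int n) t))"
    by (simp add: cross_coef_def bispec_def ac_simps del: times_complex.sel)
  then show ?thesis
    unfolding phase by simp
qed

lemma moment_inner_eq_integral_trig_poly:
  "moment_inner L k \<theta> \<eta>
    = integral {0..1} (\<lambda>t. integral {0..1} (\<lambda>s.
        (\<theta> 0 * \<eta> 0 + trig_poly (cross_coef \<theta> \<eta> t) L s) ^ k))"
  unfolding moment_inner_eq_double_integral sum_coords_gact ..

lemma moment_inner_1: "moment_inner L 1 \<theta> \<eta> = \<theta> 0 * \<eta> 0"
  using has_integral_const_add_trig_poly[THEN integral_unique]
  by (simp add: moment_inner_eq_integral_trig_poly)

lemma moment_inner_2: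
  "moment_inner L 2 \<theta> \<eta> = (\<theta> 0 * \<eta> 0) ^ 2 + (\<Sum>l=1..L. (rmag l \<theta> * rmag l \<eta>) ^ 2) / 2"
  by (simp add: moment_inner_eq_integral_trig_poly norm_cross_coef
      has_integral_const_add_trig_poly_power2[THEN integral_unique])

lemma moment_inner_3:
  "moment_inner L 3 \<theta> \<eta> = (\<theta> 0 * \<eta> 0) ^ 3
     + 3 / 2 * (\<theta> 0 * \<eta> 0) * (\<Sum>l=1..L. (rmag l \<theta> * rmag l \<eta>) ^ 2)
     + 3 / 4 * (\<Sum>(l, m, n)\<in>triples 1 L. Re (cnj (bispec l m n \<theta>) * bispec l m n \<eta>))"
proof -
  have "(\<Sum>(l, m, n)\<in>triples 1 L.
      Re (cnj (cross_coef \<theta> \<eta> t l) * cross_coef \<theta> \<eta> t m * cross_coef \<theta> \<eta> t n))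
    = (\<Sum>(l, m, n)\<in>triples 1 L. Re (cnj (bispec l m n \<theta>) * bispec l m n \<eta>))" for t
    by (intro sum.cong) (auto simp: triples_def cnj_cross_coef_mult simp del: times_complex.sel)
  then show ?thesis
    by (simp add: moment_inner_eq_integral_trig_poly norm_cross_coef
        has_integral_const_add_trig_poly_power3[THEN integral_unique] del: times_complex.sel)
qed

lemma sk_eq_moment_inner:
  "sk L \<theta>s k \<theta>
    = (moment_inner L k \<theta> \<theta> - 2 * moment_inner L k \<theta> \<theta>s + moment_inner L k \<theta>s \<theta>s) / (2 * fact k)"
proof -
  have "(Tk L k \<theta> xs - Tk L k \<theta>s xs) ^ 2
      = Tk L k \<theta> xs * Tk L k \<theta> xs - 2 * (Tk L k \<theta> xs * Tk L k \<theta>s xs) + Tk L k \<theta>s xs * Tk L k \<theta>s xs"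
    for xs
    by algebra
  then show ?thesis
    by (simp add: sk_def moment_inner_def sum.distrib sum_subtractf sum_distrib_left)
qed

lemma sk_1: "sk L \<theta>s 1 \<theta> = 1/2 * (\<theta> 0 - \<theta>s 0)^2"
  unfolding sk_eq_moment_inner moment_inner_1 by (simp add: power2_eq_square field_simps)

lemma sk_2:
  "sk L \<theta>s 2 \<theta> = 1/4 * ((\<theta> 0)^2 - (\<theta>s 0)^2)^2
    + 1/8 * (\<Sum>l=1..L. (rmag l \<theta> ^ 2 - rmag l \<theta>s ^ 2)^2)"
proof -
  have "(x ^ 2 - y ^ 2) ^ 2 = (x * x) ^ 2 - 2 * (x * y) ^ 2 + (y * y) ^ 2" for x y :: real
    by algebra
  then have "(\<Sum>l=1..L. (rmag l \<theta> ^ 2 - rmag l \<theta>s ^ 2)^2)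
    = (\<Sum>l=1..L. (rmag l \<theta> * rmag l \<theta>) ^ 2) - 2 * (\<Sum>l=1..L. (rmag l \<theta> * rmag l \<theta>s) ^ 2)
      + (\<Sum>l=1..L. (rmag l \<theta>s * rmag l \<theta>s) ^ 2)"
    by (simp add: sum.distrib sum_subtractf sum_distrib_left)
  then show ?thesis
    unfolding sk_eq_moment_inner moment_inner_2
    by (simp add: eval_nat_numeral field_simps)
qed

lemma sk_3:
  "sk L \<theta>s 3 \<theta> = 1/12 * ((\<theta> 0)^3 - (\<theta>s 0)^3)^2
    + 1/8 * (\<Sum>l=1..L. (\<theta> 0 * rmag l \<theta> ^ 2 - \<theta>s 0 * rmag l \<theta>s ^ 2)^2)
    + 1/16 * (\<Sum>(l, m, n)\<in>triples 1 L. cmod (bispec l m n \<theta> - bispec l m n \<theta>s) ^ 2)"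
proof -
  have "(a * x ^ 2 - b * y ^ 2) ^ 2
      = a * a * (x * x) ^ 2 - 2 * (a * b) * (x * y) ^ 2 + b * b * (y * y) ^ 2" for a b x y :: real
    by algebra
  then have "(\<Sum>l=1..L. (\<theta> 0 * rmag l \<theta> ^ 2 - \<theta>s 0 * rmag l \<theta>s ^ 2)^2)
    = \<theta> 0 * \<theta> 0 * (\<Sum>l=1..L. (rmag l \<theta> * rmag l \<theta>) ^ 2)
      - 2 * (\<theta> 0 * \<theta>s 0) * (\<Sum>l=1..L. (rmag l \<theta> * rmag l \<theta>s) ^ 2)
      + \<theta>s 0 * \<theta>s 0 * (\<Sum>l=1..L. (rmag l \<theta>s * rmag l \<theta>s) ^ 2)"
    by (simp add: sum.distrib sum_subtractf sum_distrib_left)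
  moreover have "cmod (z - w) ^ 2 = Re (cnj z * z) - 2 * Re (cnj z * w) + Re (cnj w * w)" for z w
    by (simp only: cmod_power2) (simp add: power2_eq_square algebra_simps)
  then have "(\<Sum>(l, m, n)\<in>triples 1 L. cmod (bispec l m n \<theta> - bispec l m n \<theta>s) ^ 2)
    = (\<Sum>(l, m, n)\<in>triples 1 L. Re (cnj (bispec l m n \<theta>) * bispec l m n \<theta>))
      - 2 * (\<Sum>(l, m, n)\<in>triples 1 L. Re (cnj (bispec l m n \<theta>) * bispec l m n \<theta>s))
      + (\<Sum>(l, m, n)\<in>triples 1 L. Re (cnj (bispec l m n \<theta>s) * bispec l m n \<theta>s))"
    by (simp add: sum.distrib sum_subtractf sum_distrib_left case_prod_unfold del: times_complex.sel)
  ultimately show ?thesis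
    unfolding sk_eq_moment_inner moment_inner_3
    by (simp add: eval_nat_numeral field_simps del: times_complex.sel)
qed

section \<open>Polar and complex forms of the third moment\<close>

lemma norm_rcis_diff_power2:
  "cmod (rcis r a - rcis s b) ^ 2 = r ^ 2 + s ^ 2 - 2 * r * s * cos (b - a)"
proof -
  have "cmod (rcis r a - rcis s b) ^ 2 = (r * cos a - s * cos b) ^ 2 + (r * sin a - s * sin b) ^ 2"
    by (simp add: cmod_power2)
  also have "\<dots> = r ^ 2 * (sin a ^ 2 + cos a ^ 2) + s ^ 2 * (sin b ^ 2 + cos b ^ 2)
      - 2 * r * s * (cos b * cos a + sin b * sin a)"
    by algebra
  finally show ?thesis
    by (simp add: cos_diff)
qed

lemma ucoef_eq_rcis: "ucoef l \<theta> = rcis (rmag l \<theta>) (phase l \<theta>)"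
  by (simp add: rmag_def phase_def rcis_cmod_Arg)

lemma bispec_eq_rcis: "bispec l m n \<theta> = rcis (r3 l m n \<theta>) (lam3 l m n \<theta>)"
proof -
  have cnj_rcis: "cnj (rcis r a) = rcis r (- a)" for r a
    by (simp add: rcis_def cis_cnj)
  show ?thesis
    by (simp add: bispec_def ucoef_eq_rcis[of _ \<theta>] cnj_rcis rcis_mult r3_def lam3_def)
      (simp add: algebra_simps)
qed

lemma norm_bispec_diff_power2:
  "cmod (bispec l m n \<theta> - bispec l m n \<eta>) ^ 2
    = r3 l m n \<theta> ^ 2 + r3 l m n \<eta> ^ 2 - 2 * r3 l m n \<theta> * r3 l m n \<eta> * cos (lam3 l m n \<eta> - lam3 l m n \<theta>)"
  unfolding bispec_eq_rcis norm_rcis_diff_power2 ..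

lemma triples_0_eq:
  "triples 0 L
    = insert (0, 0, 0) ((\<lambda>l. (l, l, 0)) ` {1..L} \<union> (\<lambda>l. (l, 0, l)) ` {1..L} \<union> triples 1 L)"
  by (auto simp: triples_def image_iff)

lemma sum_triples_0:
  "(\<Sum>x\<in>triples 0 L. g x)
    = g (0, 0, 0) + (\<Sum>l=1..L. g (l, l, 0)) + (\<Sum>l=1..L. g (l, 0, l)) + (\<Sum>x\<in>triples 1 L. g x)"
proof -
  have "finite (triples 1 L)"
    by (rule finite_subset[of _ "{1..L} \<times> {1..L} \<times> {1..L}"]) (auto simp: triples_def)
  moreover have "inj_on (\<lambda>l. (l, l, 0::nat)) {1..L}" "inj_on (\<lambda>l. (l, 0::nat, l)) {1..L}"
    by (auto simp: inj_on_def)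
  ultimately show ?thesis
    unfolding triples_0_eq
    by (subst sum.insert sum.union_disjoint sum.reindex; auto simp: triples_def add.assoc)+
qed

lemma bispec_degenerate:
  "bispec 0 0 0 \<theta> = of_real (\<theta> 0 ^ 3)"
  "bispec l l 0 \<theta> = of_real (\<theta> 0 * rmag l \<theta> ^ 2)"
  "bispec l 0 l \<theta> = of_real (\<theta> 0 * rmag l \<theta> ^ 2)"
  by (simp_all add: bispec_def ucoef_def[of 0] rmag_def power3_eq_cube mult.left_commute
      flip: complex_norm_square)

lemma bispec_sum_triples_0:
  "1/48 * cmod ((ucoef 0 \<theta>)^3 - (ucoef 0 \<theta>s)^3) ^ 2
    + 1/16 * (\<Sum>(l, l', l'')\<in>triples 0 L.
        cmod (ucoef l \<theta> * cnj (ucoef l' \<theta> * ucoef l'' \<theta>)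
              - ucoef l \<theta>s * cnj (ucoef l' \<theta>s * ucoef l'' \<theta>s)) ^ 2)
  = 1/12 * ((\<theta> 0)^3 - (\<theta>s 0)^3)^2
    + 1/8 * (\<Sum>l=1..L. (\<theta> 0 * rmag l \<theta> ^ 2 - \<theta>s 0 * rmag l \<theta>s ^ 2)^2)
    + 1/16 * (\<Sum>(l, m, n)\<in>triples 1 L. cmod (bispec l m n \<theta> - bispec l m n \<theta>s) ^ 2)"
proof -
  have "(ucoef 0 \<theta>)^3 - (ucoef 0 \<theta>s)^3 = of_real ((\<theta> 0)^3 - (\<theta>s 0)^3)"
    by (simp add: ucoef_def)
  then show ?thesis
    unfolding bispec_def[symmetric] sum_triples_0 prod.case bispec_degenerate(1)
    by (simp add: bispec_degenerate(2,3) flip: of_real_diff del: of_real_mult of_real_power)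
      argo
qed

theorem theorem3p3:
  fixes L :: nat and \<theta> \<theta>s :: "nat \<Rightarrow> real"
  assumes "L \<ge> 1"
  shows "sk L \<theta>s 1 \<theta> = 1/2 * (\<theta> 0 - \<theta>s 0)^2
    \<and> sk L \<theta>s 2 \<theta> = 1/4 * ((\<theta> 0)^2 - (\<theta>s 0)^2)^2
        + 1/8 * (\<Sum>l=1..L. (rmag l \<theta> ^ 2 - rmag l \<theta>s ^ 2)^2)
    \<and> sk L \<theta>s 3 \<theta> = 1/48 * cmod ((ucoef 0 \<theta>)^3 - (ucoef 0 \<theta>s)^3) ^ 2
        + 1/16 * (\<Sum>(l, l', l'')\<in>triples 0 L.
            cmod (ucoef l \<theta> * cnj (ucoef l' \<theta> * ucoef l'' \<theta>)
                  - ucoef l \<theta>s * cnj (ucoef l' \<theta>s * ucoef l'' \<theta>s)) ^ 2)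
    \<and> 1/48 * cmod ((ucoef 0 \<theta>)^3 - (ucoef 0 \<theta>s)^3) ^ 2
        + 1/16 * (\<Sum>(l, l', l'')\<in>triples 0 L.
            cmod (ucoef l \<theta> * cnj (ucoef l' \<theta> * ucoef l'' \<theta>)
                  - ucoef l \<theta>s * cnj (ucoef l' \<theta>s * ucoef l'' \<theta>s)) ^ 2)
      = 1/12 * ((\<theta> 0)^3 - (\<theta>s 0)^3)^2
        + 1/8 * (\<Sum>l=1..L. (\<theta> 0 * rmag l \<theta> ^ 2 - \<theta>s 0 * rmag l \<theta>s ^ 2)^2)
        + 1/16 * (\<Sum>(l, l', l'')\<in>triples 1 L.
            r3 l l' l'' \<theta> ^ 2 + r3 l l' l'' \<theta>s ^ 2
            - 2 * r3 l l' l'' \<theta> * r3 l l' l'' \<theta>s * cos (lam3 l l' l'' \<theta>s - lam3 l l' l'' \<theta>))"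
  by (intro conjI sk_1 sk_2)
    (simp_all only: sk_3 bispec_sum_triples_0 norm_bispec_diff_power2)

end
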